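(* Let $G_{\max}=(V,E_{\max})$ be a finite, simple, connected, undirected graph on $N$ nodes and let $\lambda',\mu',\gamma'>0$. Consider the Sum-Dependent Dynamic Bond Percolation (SUD-DBP) process $\{A(t),t\ge 0\}$: the continuous-time Markov process whose state space $\mathcal{A}$ is the set of all $2^{|E_{\max}|}$ subsets $E(\mathbf{A})\subseteq E_{\max}$ of closed edges (equivalently, the symmetric $0/1$ adjacency matrices $\mathbf{A}$ supported on $E_{\max}$), in which only one edge changes state per transition, each closed edge $(a,b)$ opens at rate $\mu'$, and each open edge $(a,b)\in E_{\max}$ closes at rate $\lambda'\gamma'^{\,k_a+k_b}$, where $k_i=\sum_{j=1}^N\mathbf{A}_{ij}$ is the number of closed edges incident to node $i$ in the current state $\mathbf{A}$. Then $\{A(t)\}$ is a reversible Markov process and its equilibrium distribution is \[ \pi(\mathbf{A})=\frac{1}{Z}\left(\frac{\lambda'}{\mu'}\right)^{|E(\mathbf{A})|}\gamma'^{\,g(E(\mathbf{A}))},\qquad \mathbf{A}\in\mathcal{A}, \] where $Z=\sum_{\mathbf{A}\in\mathcal{A}}(\lambda'/\mu')^{|E(\mathbf{A})|}\gamma'^{\,g(E(\mathbf{A}))}$, $|E(\mathbf{A})|=\frac{\mathbf{1}^T\mathbf{A}\mathbf{1}}{2}$ is the number of closed edges, and $g(E(\mathbf{A}))$ is the number of $P_3$ subgraphs (paths on 3 vertices) formed by the closed edges, given by \[ g(E(\mathbf{A}))=\sum_{i=1}^N\sum_{j>i}(\mathbf{A}^2)_{i,j}=\sum_{i=1}^N\binom{k_i}{2}.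 \]
   Context: An edge is "closed" if it is present in the current network state and "open" otherwise; the network state is the adjacency matrix $\mathbf{A}$ of the graph $(V,E(\mathbf{A}))$ of closed edges. $\mathbf{1}=[1,\dots,1]^T$. A $P_3$ subgraph is a path with 3 distinct vertices and 2 edges. A stationary Markov process is reversible if it is statistically the same run forward and backward in time (equivalently, its equilibrium distribution satisfies detailed balance $\pi(j)q(j,k)=\pi(k)q(k,j)$ for all states $j,k$, with $q$ the transition rates). *)

theory Defs
  imports Complex_Main
begin

definition simple_graph :: "'a set \<Rightarrow> 'a set set \<Rightarrow> bool" where
  "simple_graph V E \<longleftrightarrow> finite V \<and>
     (\<forall>e\<in>E. \<exists>a b. a \<in> V \<and> b \<in> V \<and> a \<noteq> b \<and> e = {a, b})"

definition connected_graph :: "'a set \<Rightarrow> 'a set set \<Rightarrow> bool" where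
  "connected_graph V E \<longleftrightarrow>
     (\<forall>u\<in>V. \<forall>v\<in>V. (u, v) \<in> {(a, b). {a, b} \<in> E}\<^sup>*)"

definition deg :: "'a set set \<Rightarrow> 'a \<Rightarrow> nat" where
  "deg S i = card {e \<in> S. i \<in> e}"

text \<open>Number of P3 subgraphs formed by the edge set S: pairs of edges of S
  spanning exactly 3 vertices (a path with 3 distinct vertices and 2 edges).\<close>
definition numP3 :: "'a set set \<Rightarrow> nat" where
  "numP3 S = card {F. F \<subseteq> S \<and> card F = 2 \<and> card (\<Union>F) = 3}"

definition sud_rate :: "'a set set \<Rightarrow> real \<Rightarrow> real \<Rightarrow> real \<Rightarrow> 'a set set \<Rightarrow> 'a set set \<Rightarrow> real" where
  "sud_rate Emax lam mu gam S T =
     (if S \<subseteq> Emax \<and> T \<subseteq> Emax then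
        (if \<exists>e\<in>Emax - S. T = insert e S
         then (let e = (THE e. e \<in> Emax - S \<and> T = insert e S) in lam * gam ^ (\<Sum>v\<in>e. deg S v))
         else if \<exists>e\<in>S. T = S - {e} then mu else 0)
      else 0)"

definition sud_pi :: "'a set set \<Rightarrow> real \<Rightarrow> real \<Rightarrow> real \<Rightarrow> 'a set set \<Rightarrow> real" where
  "sud_pi Emax lam mu gam S =
     (lam / mu) ^ card S * gam ^ numP3 S /
     (\<Sum>T\<in>Pow Emax. (lam / mu) ^ card T * gam ^ numP3 T)"

definition stationary_dist :: "'s set \<Rightarrow> ('s \<Rightarrow> 's \<Rightarrow> real) \<Rightarrow> ('s \<Rightarrow> real) \<Rightarrow> bool" where
  "stationary_dist X q p \<longleftrightarrow> (\<forall>s\<in>X. p s \<ge> 0) \<and> (\<Sum>s\<in>X. p s) = 1 \<and>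
     (\<forall>t\<in>X. (\<Sum>s\<in>X - {t}. p s * q s t) = p t * (\<Sum>u\<in>X - {t}. q t u))"

end

theory Submission
  imports Defs
begin

text \<open>Adding an open edge e to a state S raises the number of P3 subgraphs by the sum of the
  current degrees of the endpoints of e, which is exactly the exponent of gam in its closing
  rate. Hence the weight (lam/mu)^|S| * gam^numP3 S satisfies detailed balance across every
  transition, and normalising it gives a reversible equilibrium. It is the only one, because
  every state communicates with the empty state, and for an irreducible chain the ratio of any
  stationary distribution to a reversible one is harmonic, hence constant by the maximum
  principle.\<close>

definition detailed_balance :: "'s set \<Rightarrow> ('s \<Rightarrow> 's \<Rightarrow> real) \<Rightarrow> ('s \<Rightarrow> real) \<Rightarrow> bool" where
  "detailed_balance X q p \<longleftrightarrow> (\<forall>s\<in>X. \<forall>t\<in>X. p s * q s t = p t * q t s)"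

definition irreducible :: "'s set \<Rightarrow> ('s \<Rightarrow> 's \<Rightarrow> real) \<Rightarrow> bool" where
  "irreducible X q \<longleftrightarrow> (\<forall>s\<in>X. \<forall>t\<in>X. (s, t) \<in> {(s, t). s \<in> X \<and> t \<in> X \<and> q s t > 0}\<^sup>*)"

lemma stationary_dist_if_detailed_balance:
  assumes "\<forall>s\<in>X. p s \<ge> 0" "(\<Sum>s\<in>X. p s) = 1" "detailed_balance X q p"
  shows "stationary_dist X q p"
  unfolding stationary_dist_def
proof (intro conjI ballI assms(1,2) [rule_format])
  fix t assume "t \<in> X"
  then have "(\<Sum>s\<in>X - {t}. p s * q s t) = (\<Sum>s\<in>X - {t}. p t * q t s)"
    using assms(3) unfolding detailed_balance_def by (intro sum.cong) auto
  then show "(\<Sum>s\<in>X - {t}. p s * q s t) = p t * (\<Sum>u\<in>X - {t}. q t u)"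
    by (simp add: sum_distrib_left)
qed

lemma stationary_ratio_harmonic:
  assumes "detailed_balance X q w" "\<forall>s\<in>X. w s > 0" "stationary_dist X q p" "t \<in> X"
  shows "(\<Sum>s\<in>X - {t}. q t s * (p t / w t - p s / w s)) = 0"
proof -
  have "w t > 0" using assms(2,4) by blast
  have "w t * (\<Sum>s\<in>X - {t}. q t s * (p s / w s)) = (\<Sum>s\<in>X - {t}. p s * q s t)"
    unfolding sum_distrib_left using assms(1,2,4) unfolding detailed_balance_def
    by (intro sum.cong) (auto simp: field_simps)
  also have "\<dots> = p t * (\<Sum>s\<in>X - {t}. q t s)"
    using assms(3,4) unfolding stationary_dist_def by blast
  also have "\<dots> = w t * (\<Sum>s\<in>X - {t}. q t s * (p t / w t))"
    using \<open>w t > 0\<close> by (simp add: sum_distrib_left sum_distrib_right mult.commute)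
  finally show ?thesis
    using \<open>w t > 0\<close> by (simp add: right_diff_distrib sum_subtractf)
qed

text \<open>Maximum principle: the rates are nonnegative, so at a maximiser of h every summand
  vanishes and the maximum propagates along positive-rate transitions.\<close>
lemma harmonic_const_if_irreducible:
  fixes h :: "'s \<Rightarrow> real"
  assumes "finite X" "\<forall>s\<in>X. \<forall>t\<in>X. q s t \<ge> 0" "irreducible X q"
    and harmonic: "\<forall>t\<in>X. (\<Sum>s\<in>X - {t}. q t s * (h t - h s)) = 0"
    and "s \<in> X"
  shows "\<forall>t\<in>X. h t = h s"
proof -
  define m where "m = Max (h ` X)"
  have le_m: "h t \<le> m" if "t \<in> X" for t
    unfolding m_def using assms(1) that by simp
  obtain t0 where "t0 \<in> X" "h t0 = m"
    unfolding m_def using Max_in[of "h ` X"] assms(1,5) by fastforce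
  have propagate: "h u = m" if "t \<in> X" "h t = m" "u \<in> X" "u \<noteq> t" "q t u > 0" for t u
  proof -
    have nonneg: "0 \<le> q t x * (h t - h x)" if "x \<in> X - {t}" for x
      using assms(2) le_m \<open>t \<in> X\<close> \<open>h t = m\<close> that by (intro mult_nonneg_nonneg) auto
    have "(\<Sum>x\<in>X - {t}. q t x * (h t - h x)) = 0" using harmonic that(1) by blast
    then have "\<forall>x\<in>X - {t}. q t x * (h t - h x) = 0"
      by (subst (asm) sum_nonneg_eq_0_iff) (use assms(1) nonneg in auto)
    then have "q t u * (h t - h u) = 0" using that(3,4) by blast
    with that(2,5) show ?thesis by simp
  qed
  have "h t = m" if "t \<in> X" for t
  proof -
    have "(t0, t) \<in> {(s, t). s \<in> X \<and> t \<in> X \<and> q s t > 0}\<^sup>*"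
      using assms(3) \<open>t0 \<in> X\<close> that unfolding irreducible_def by blast
    then show ?thesis
    proof (induction rule: rtrancl_induct)
      case (step y z)
      then show ?case using propagate by (cases "z = y") auto
    qed (use \<open>h t0 = m\<close> in simp)
  qed
  then show ?thesis using assms(5) by simp
qed

lemma stationary_dist_unique:
  assumes "finite X" "\<forall>s\<in>X. \<forall>t\<in>X. q s t \<ge> 0" "irreducible X q"
    and "stationary_dist X q w" "detailed_balance X q w" "\<forall>s\<in>X. w s > 0"
    and "stationary_dist X q p" "s \<in> X"
  shows "p s = w s"
proof -
  define c where "c = p s / w s"
  have "\<forall>t\<in>X. p t / w t = c"
    unfolding c_def using stationary_ratio_harmonic[OF assms(5,6,7)]
    by (intro harmonic_const_if_irreducible[OF assms(1-3) _ assms(8)]) blast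
  then have p_eq: "p t = c * w t" if "t \<in> X" for t
    using that assms(6) by (metis divide_eq_eq less_irrefl)
  have "1 = (\<Sum>t\<in>X. p t)" using assms(7) unfolding stationary_dist_def by simp
  also have "\<dots> = c * (\<Sum>t\<in>X. w t)" using p_eq by (simp add: sum_distrib_left)
  also have "\<dots> = c" using assms(4) unfolding stationary_dist_def by simp
  finally have "c = 1" ..
  then show ?thesis using p_eq assms(8) by simp
qed

lemma detailed_balance_divide:
  "detailed_balance X q w \<Longrightarrow> detailed_balance X q (\<lambda>s. w s / c)"
  unfolding detailed_balance_def by (simp add: times_divide_eq_left)

lemma simple_graph_edges:
  assumes "simple_graph V E"
  shows "finite V" "finite E" "\<forall>e\<in>E. e \<subseteq> V \<and> card e = 2"
proof -
  show "finite V" and edges: "\<forall>e\<in>E. e \<subseteq> V \<and> card e = 2"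
    using assms unfolding simple_graph_def by auto
  with \<open>finite V\<close> show "finite E"
    by (meson Pow_iff finite_Pow_iff finite_subset subsetI)
qed

lemma card_Int_le_1_if_card_2:
  assumes "card f = 2" "card g = 2" "f \<noteq> g"
  shows "card (f \<inter> g) \<le> 1"
proof -
  have fin: "finite f" "finite g" using assms(1,2) by (auto intro: card_ge_0_finite)
  have "card (f \<inter> g) \<noteq> 2"
  proof
    assume "card (f \<inter> g) = 2"
    then have "f \<inter> g = f" "f \<inter> g = g" using fin assms(1,2)
      by (metis Int_lower1 Int_lower2 card_subset_eq)+
    with assms(3) show False by simp
  qed
  moreover have "card (f \<inter> g) \<le> 2" using fin assms(1) by (metis Int_lower1 card_mono)
  ultimately show ?thesis by linarith
qed

lemma card_Un_eq_3_iff_if_card_2: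
  assumes "card f = 2" "card g = 2" "f \<noteq> g"
  shows "card (f \<union> g) = 3 \<longleftrightarrow> f \<inter> g \<noteq> {}"
proof -
  have fin: "finite f" "finite g" using assms(1,2) by (auto intro: card_ge_0_finite)
  then have "card (f \<union> g) + card (f \<inter> g) = 4" using assms(1,2) card_Un_Int by fastforce
  moreover have "card (f \<inter> g) \<le> 1" using card_Int_le_1_if_card_2[OF assms] .
  moreover have "card (f \<inter> g) = 0 \<longleftrightarrow> f \<inter> g = {}" using fin by simp
  ultimately show ?thesis by linarith
qed

text \<open>A P3 is a pair of edges sharing a vertex, and distinct edges share at most one vertex,
  so the P3s are partitioned by their middle vertex.\<close>
lemma numP3_eq_sum_deg_choose_2:
  assumes "finite V" "finite S" and edges: "\<forall>e\<in>S. e \<subseteq> V \<and> card e = 2"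
  shows "numP3 S = (\<Sum>i\<in>V. deg S i choose 2)"
proof -
  define P where "P i = {F. F \<subseteq> {e \<in> S. i \<in> e} \<and> card F = 2}" for i
  have pair_iff: "card (\<Union>F) = 3 \<longleftrightarrow> (\<exists>i\<in>V. F \<in> P i)" if "F \<subseteq> S" "card F = 2" for F
  proof -
    obtain f g where fg: "F = {f, g}" "f \<noteq> g" using \<open>card F = 2\<close> by (meson card_2_iff)
    then have "card (\<Union>F) = 3 \<longleftrightarrow> f \<inter> g \<noteq> {}"
      using card_Un_eq_3_iff_if_card_2 edges that(1) by auto
    also have "\<dots> \<longleftrightarrow> (\<exists>i\<in>V. i \<in> f \<and> i \<in> g)" using edges that(1) fg by auto
    finally show ?thesis using that fg unfolding P_def by auto
  qed
  have "{F. F \<subseteq> S \<and> card F = 2 \<and> card (\<Union>F) = 3} = (\<Union>i\<in>V. P i)"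
    using pair_iff unfolding P_def by auto
  moreover have "P i \<inter> P j = {}" if "i \<noteq> j" for i j
  proof (rule ccontr)
    assume "P i \<inter> P j \<noteq> {}"
    then obtain F where F: "F \<subseteq> S" "card F = 2" "\<forall>f\<in>F. i \<in> f \<and> j \<in> f"
      unfolding P_def by auto
    then obtain f g where fg: "F = {f, g}" "f \<noteq> g" by (meson card_2_iff)
    have "card f = 2" "card g = 2" using edges F fg by auto
    then have "card (f \<inter> g) \<le> 1" using fg card_Int_le_1_if_card_2 by blast
    moreover have "card {i, j} \<le> card (f \<inter> g)"
    proof (rule card_mono)
      show "finite (f \<inter> g)" using \<open>card f = 2\<close> card.infinite by fastforce
      show "{i, j} \<subseteq> f \<inter> g" using F fg by auto
    qed
    ultimately show False using \<open>i \<noteq> j\<close> by simp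
  qed
  moreover have "card (P i) = deg S i choose 2" for i
    unfolding P_def deg_def by (rule n_subsets) (use \<open>finite S\<close> in simp)
  moreover have "finite (P i)" for i
    unfolding P_def using \<open>finite S\<close> by (auto intro: finite_subset[of _ "Pow S"])
  ultimately show ?thesis
    unfolding numP3_def using \<open>finite V\<close> by (simp add: card_UN_disjoint)
qed

lemma deg_insert:
  assumes "finite S" "e \<notin> S"
  shows "deg (insert e S) i = deg S i + (if i \<in> e then 1 else 0)"
proof -
  have "{f \<in> insert e S. i \<in> f} = (if i \<in> e then insert e {f \<in> S. i \<in> f} else {f \<in> S. i \<in> f})"
    by auto
  then show ?thesis using assms unfolding deg_def by simp
qed

lemma numP3_insert:
  assumes "finite S" "e \<notin> S" and edges: "\<forall>f\<in>insert e S. card f = 2"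
  shows "numP3 (insert e S) = numP3 S + (\<Sum>v\<in>e. deg S v)"
proof -
  define V where "V = \<Union>(insert e S)"
  have "finite f" if "f \<in> insert e S" for f
    using edges that by (metis card.infinite zero_neq_numeral)
  then have "finite V" unfolding V_def using assms(1) by blast
  have edges_V: "\<forall>f\<in>insert e S. f \<subseteq> V \<and> card f = 2" using edges unfolding V_def by auto
  have "numP3 (insert e S) = (\<Sum>i\<in>V. deg (insert e S) i choose 2)"
    using numP3_eq_sum_deg_choose_2[OF \<open>finite V\<close> _ edges_V] assms(1) by simp
  also have "\<dots> = (\<Sum>i\<in>V. (deg S i choose 2) + (if i \<in> e then deg S i else 0))"
    using deg_insert[OF assms(1,2)] by (intro sum.cong) (auto simp: numeral_2_eq_2)
  also have "\<dots> = numP3 S + (\<Sum>i\<in>V \<inter> e. deg S i)"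
    using numP3_eq_sum_deg_choose_2[OF \<open>finite V\<close> assms(1)] edges_V \<open>finite V\<close>
    by (simp add: sum.distrib sum.inter_restrict)
  also have "V \<inter> e = e" unfolding V_def by auto
  finally show ?thesis .
qed

lemma sud_rate_insert:
  assumes "S \<subseteq> Emax" "e \<in> Emax" "e \<notin> S"
  shows "sud_rate Emax lam mu gam S (insert e S) = lam * gam ^ (\<Sum>v\<in>e. deg S v)"
proof -
  have "(THE e'. e' \<in> Emax - S \<and> insert e S = insert e' S) = e"
    by (rule the_equality) (use assms in auto)
  then show ?thesis unfolding sud_rate_def Let_def using assms by auto
qed

lemma sud_rate_remove:
  assumes "S \<subseteq> Emax" "e \<in> S"
  shows "sud_rate Emax lam mu gam S (S - {e}) = mu"
proof -
  have "\<not> (\<exists>e'\<in>Emax - S. S - {e} = insert e' S)" using assms(2) by blast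
  moreover have "\<exists>e'\<in>S. S - {e} = S - {e'}" using assms(2) by blast
  moreover have "S - {e} \<subseteq> Emax" using assms(1) by blast
  ultimately show ?thesis unfolding sud_rate_def using assms(1) by simp
qed

lemma sud_rate_eq_0:
  assumes "\<forall>e\<in>Emax - S. T \<noteq> insert e S" "\<forall>e\<in>Emax - T. S \<noteq> insert e T"
  shows "sud_rate Emax lam mu gam S T = 0"
proof (cases "S \<subseteq> Emax")
  case True
  then have "\<not> (\<exists>e\<in>S. T = S - {e})" using assms(2) by blast
  then show ?thesis unfolding sud_rate_def using assms(1) by simp
qed (simp add: sud_rate_def)

lemma sud_rate_nonneg:
  assumes "lam \<ge> 0" "mu \<ge> 0" "gam \<ge> 0"
  shows "sud_rate Emax lam mu gam S T \<ge> 0"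
  using assms unfolding sud_rate_def Let_def by simp

definition sud_weight :: "real \<Rightarrow> real \<Rightarrow> real \<Rightarrow> 'a set set \<Rightarrow> real" where
  "sud_weight lam mu gam S = (lam / mu) ^ card S * gam ^ numP3 S"

lemma sud_weight_balance_insert:
  assumes "finite Emax" "\<forall>f\<in>Emax. card f = 2" "mu \<noteq> 0"
    and "S \<subseteq> Emax" "e \<in> Emax" "e \<notin> S"
  shows "sud_weight lam mu gam S * sud_rate Emax lam mu gam S (insert e S)
       = sud_weight lam mu gam (insert e S) * sud_rate Emax lam mu gam (insert e S) S"
proof -
  have "finite S" using assms(1,4) finite_subset by blast
  have "sud_rate Emax lam mu gam (insert e S) S = mu"
    using sud_rate_remove[of "insert e S" Emax e] assms(4-6) by simp
  moreover have "numP3 (insert e S) = numP3 S + (\<Sum>v\<in>e. deg S v)"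
    using numP3_insert[OF \<open>finite S\<close> assms(6)] assms(2,4,5) by blast
  moreover have "card (insert e S) = Suc (card S)" using \<open>finite S\<close> assms(6) by simp
  ultimately show ?thesis
    using sud_rate_insert[OF assms(4-6)] assms(3)
    by (simp add: sud_weight_def power_add field_simps)
qed

lemma sud_weight_detailed_balance:
  assumes "finite Emax" "\<forall>f\<in>Emax. card f = 2" "mu \<noteq> 0"
  shows "detailed_balance (Pow Emax) (sud_rate Emax lam mu gam) (sud_weight lam mu gam)"
  unfolding detailed_balance_def
proof (intro ballI)
  fix S T assume "S \<in> Pow Emax" "T \<in> Pow Emax"
  then consider
      e where "e \<in> Emax - S" "T = insert e S"
    | e where "e \<in> Emax - T" "S = insert e T"
    | "\<forall>e\<in>Emax - S. T \<noteq> insert e S" "\<forall>e\<in>Emax - T. S \<noteq> insert e T"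
    by blast
  then show "sud_weight lam mu gam S * sud_rate Emax lam mu gam S T
           = sud_weight lam mu gam T * sud_rate Emax lam mu gam T S"
  proof cases
    case 1
    then show ?thesis
      using sud_weight_balance_insert[OF assms] \<open>S \<in> Pow Emax\<close> by simp
  next
    case 2
    then show ?thesis
      using sud_weight_balance_insert[OF assms] \<open>T \<in> Pow Emax\<close> by simp
  next
    case 3
    then show ?thesis using sud_rate_eq_0 by (metis mult_zero_right)
  qed
qed

lemma sud_rate_irreducible:
  assumes "finite Emax" "lam > 0" "mu > 0" "gam > 0"
  shows "irreducible (Pow Emax) (sud_rate Emax lam mu gam)"
proof -
  define R where "R = {(s, t). s \<in> Pow Emax \<and> t \<in> Pow Emax \<and> sud_rate Emax lam mu gam s t > 0}"
  have "(S, {}) \<in> R\<^sup>* \<and> ({}, S) \<in> R\<^sup>*" if "S \<subseteq> Emax" for S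
    using finite_subset[OF that assms(1)] that
  proof (induction S rule: finite_induct)
    case (insert e F)
    have "(insert e F, F) \<in> R"
      using sud_rate_remove[of "insert e F" Emax e] insert assms(3) by (simp add: R_def)
    moreover have "(F, insert e F) \<in> R"
      using sud_rate_insert[of F Emax e] insert assms(2,4) by (simp add: R_def)
    ultimately show ?case using insert by (meson insert_subset converse_rtrancl_into_rtrancl
        rtrancl_into_rtrancl)
  qed simp
  then show ?thesis unfolding irreducible_def R_def[symmetric]
    by (meson PowD rtrancl_trans)
qed

lemma sud_pi_eq_normalized_weight:
  "sud_pi Emax lam mu gam = (\<lambda>S. sud_weight lam mu gam S / (\<Sum>T\<in>Pow Emax. sud_weight lam mu gam T))"
  by (simp add: fun_eq_iff sud_pi_def sud_weight_def)

lemma sud_weight_sum_pos: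
  assumes "finite Emax" "lam > 0" "mu > 0" "gam > 0"
  shows "(\<Sum>T\<in>Pow Emax. sud_weight lam mu gam T) > 0"
  using assms by (intro sum_pos) (auto simp: sud_weight_def)

lemma sud_pi_pos:
  assumes "finite Emax" "lam > 0" "mu > 0" "gam > 0"
  shows "sud_pi Emax lam mu gam S > 0"
  using sud_weight_sum_pos[OF assms] assms(2-4)
  by (simp add: sud_pi_eq_normalized_weight sud_weight_def)

lemma sum_sud_pi:
  assumes "finite Emax" "lam > 0" "mu > 0" "gam > 0"
  shows "(\<Sum>S\<in>Pow Emax. sud_pi Emax lam mu gam S) = 1"
  using sud_weight_sum_pos[OF assms]
  by (simp add: sud_pi_eq_normalized_weight flip: sum_divide_distrib)

theorem theorem2:
  fixes V :: "'a set" and Emax :: "'a set set" and lam mu gam :: real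
  assumes "simple_graph V Emax" and "connected_graph V Emax"
    and "lam > 0" and "mu > 0" and "gam > 0"
  shows "(\<forall>S\<in>Pow Emax. numP3 S = (\<Sum>i\<in>V. deg S i choose 2))
    \<and> stationary_dist (Pow Emax) (sud_rate Emax lam mu gam) (sud_pi Emax lam mu gam)
    \<and> (\<forall>p. stationary_dist (Pow Emax) (sud_rate Emax lam mu gam) p \<longrightarrow>
            (\<forall>S\<in>Pow Emax. p S = sud_pi Emax lam mu gam S))
    \<and> (\<forall>S\<in>Pow Emax. \<forall>T\<in>Pow Emax.
         sud_pi Emax lam mu gam S * sud_rate Emax lam mu gam S T =
         sud_pi Emax lam mu gam T * sud_rate Emax lam mu gam T S)"
proof -
  note pos = assms(3-5)
  note graph = simple_graph_edges[OF assms(1)]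
  let ?X = "Pow Emax" and ?q = "sud_rate Emax lam mu gam" and ?pi = "sud_pi Emax lam mu gam"
  have P3: "\<forall>S\<in>?X. numP3 S = (\<Sum>i\<in>V. deg S i choose 2)"
    using graph by (auto intro!: numP3_eq_sum_deg_choose_2 intro: finite_subset)
  have db: "detailed_balance ?X ?q ?pi"
    unfolding sud_pi_eq_normalized_weight using graph pos
    by (intro detailed_balance_divide sud_weight_detailed_balance) auto
  have pi_pos: "\<forall>S\<in>?X. ?pi S > 0" using sud_pi_pos[OF graph(2) pos] by blast
  have st: "stationary_dist ?X ?q ?pi"
    using pi_pos by (intro stationary_dist_if_detailed_balance sum_sud_pi[OF graph(2) pos] db)
      (simp add: less_imp_le)
  have "finite ?X" using graph(2) by simp
  moreover have "\<forall>S\<in>?X. \<forall>T\<in>?X. ?q S T \<ge> 0" using pos by (simp add: sud_rate_nonneg less_imp_le)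
  ultimately have "\<forall>p. stationary_dist ?X ?q p \<longrightarrow> (\<forall>S\<in>?X. p S = ?pi S)"
    using stationary_dist_unique[OF _ _ sud_rate_irreducible[OF graph(2) pos] st db pi_pos] by blast
  with P3 st db show ?thesis unfolding detailed_balance_def by blast
qed

end
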